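(* For every $\varepsilon>0$ there exists $C_\varepsilon>0$ such that for every integer $N\ge1$, \[ \max_{\alpha\in\mathcal O_N}\ \sum_{\beta\in\mathcal O_N}\sqrt{\Gamma_{\alpha\beta}}\le C_\varepsilon N^{4+\varepsilon}. \]
   Context: For an integer $N\ge1$, $\Lambda_N:=\{k\in\mathbb Z^3\setminus\{0\}:|k|_\infty\le N\}$. The full octahedral group $O_h$ is the group of the 48 signed coordinate permutations of $\mathbb Z^3$; it acts on $\Lambda_N$ and $\mathcal O_N:=\Lambda_N/O_h$ is the set of orbits. For $\alpha,\beta\in\mathcal O_N$, $\Gamma_{\alpha\beta}:=\#\{(k,p,q):k\in\alpha,\ p\in\beta,\ q=k-p\in\Lambda_N\}$. *)

theory Defs
  imports Complex_Main "HOL-Combinatorics.Permutations"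
begin

type_synonym pt = "int \<times> int \<times> int"

definition coord :: "pt \<Rightarrow> nat \<Rightarrow> int" where
  "coord x i = (case x of (a, b, c) \<Rightarrow> (if i = 0 then a else if i = 1 then b else c))"

definition supnorm :: "pt \<Rightarrow> int" where
  "supnorm x = (case x of (a, b, c) \<Rightarrow> max \<bar>a\<bar> (max \<bar>b\<bar> \<bar>c\<bar>))"

definition psub :: "pt \<Rightarrow> pt \<Rightarrow> pt" where
  "psub x y = (case x of (a, b, c) \<Rightarrow> case y of (a', b', c') \<Rightarrow> (a - a', b - b', c - c'))"

definition Lambda :: "nat \<Rightarrow> pt set" where
  "Lambda N = {k. k \<noteq> (0, 0, 0) \<and> supnorm k \<le> int N}"

definition Oh :: "(pt \<Rightarrow> pt) set" where
  "Oh = {(\<lambda>x. (s 0 * coord x (\<sigma> 0), s 1 * coord x (\<sigma> 1), s 2 * coord x (\<sigma> 2))) |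
           \<sigma> s. \<sigma> permutes {0, 1, 2} \<and> (\<forall>i\<in>{0,1,2::nat}. s i \<in> {-1, 1::int})}"

definition orbit :: "pt \<Rightarrow> pt set" where
  "orbit k = (\<lambda>g. g k) ` Oh"

definition orbits :: "nat \<Rightarrow> pt set set" where
  "orbits N = orbit ` Lambda N"

definition Gamma :: "nat \<Rightarrow> pt set \<Rightarrow> pt set \<Rightarrow> nat" where
  "Gamma N \<alpha> \<beta> = card {(k, p, q). k \<in> \<alpha> \<and> p \<in> \<beta> \<and> q = psub k p \<and> q \<in> Lambda N}"

end

theory Submission
  imports Defs
begin

text \<open>The coordinates of a point in the orbit of (a, b, c) lie in {\<plusminus>a, \<plusminus>b, \<plusminus>c}, so every
  orbit has at most 6^3 points (in fact at most 48) and Gamma is bounded by a constant.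
  Since there are at most |Lambda N| \<le> (2N+1)^3 orbits, every row sum of sqrt Gamma is
  O(N^3), well below N^(4+\<epsilon>).\<close>

lemma orbit_subset:
  fixes a b c :: int
  defines "S \<equiv> {a, -a, b, -b, c, -c}"
  shows "orbit (a, b, c) \<subseteq> S \<times> S \<times> S"
proof
  fix y assume "y \<in> orbit (a, b, c)"
  then obtain \<sigma> :: "nat \<Rightarrow> nat" and s :: "nat \<Rightarrow> int"
    where y: "y = (s 0 * coord (a, b, c) (\<sigma> 0), s 1 * coord (a, b, c) (\<sigma> 1),
                   s 2 * coord (a, b, c) (\<sigma> 2))"
      and s: "\<forall>i\<in>{0, 1, 2::nat}. s i \<in> {-1, 1}"
    unfolding orbit_def Oh_def by blast
  have "s i * coord (a, b, c) j \<in> S" if "i \<in> {0, 1, 2}" for i j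
  proof -
    have "s i \<in> {-1, 1}"
      using s that by blast
    moreover have "coord (a, b, c) j \<in> {a, b, c}"
      by (simp add: coord_def)
    ultimately show ?thesis
      unfolding S_def by auto
  qed
  then show "y \<in> S \<times> S \<times> S"
    unfolding y by (intro SigmaI) simp_all
qed

lemma finite_orbit: "finite (orbit k)"
proof (cases k)
  case (fields a b c)
  show ?thesis
    unfolding fields by (rule finite_subset[OF orbit_subset]) simp
qed

lemma card_orbit_le: "card (orbit k) \<le> 216"
proof (cases k)
  case (fields a b c)
  define S where "S = {a, -a, b, -b, c, -c}"
  have "card S \<le> 6"
    unfolding S_def using card_length[of "[a, -a, b, -b, c, -c]"] by simp
  then have "card (S \<times> S \<times> S) \<le> 6 * (6 * 6)"
    unfolding card_cartesian_product by (intro mult_le_mono)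
  moreover have "card (orbit k) \<le> card (S \<times> S \<times> S)"
    unfolding fields S_def by (intro card_mono orbit_subset) auto
  ultimately show ?thesis by simp
qed

lemma Gamma_le_card_mult:
  assumes "finite \<alpha>" "finite \<beta>"
  shows "Gamma N \<alpha> \<beta> \<le> card \<alpha> * card \<beta>"
proof -
  have "{(k, p, q). k \<in> \<alpha> \<and> p \<in> \<beta> \<and> q = psub k p \<and> q \<in> Lambda N}
          \<subseteq> (\<lambda>(k, p). (k, p, psub k p)) ` (\<alpha> \<times> \<beta>)"
    by auto
  then have "Gamma N \<alpha> \<beta> \<le> card ((\<lambda>(k, p). (k, p, psub k p)) ` (\<alpha> \<times> \<beta>))"
    unfolding Gamma_def using assms by (intro card_mono) auto
  also have "\<dots> \<le> card (\<alpha> \<times> \<beta>)"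
    by (rule card_image_le) (use assms in simp)
  finally show ?thesis
    by (simp add: card_cartesian_product)
qed

lemma Gamma_orbits_le:
  assumes "\<alpha> \<in> orbits N" "\<beta> \<in> orbits N"
  shows "Gamma N \<alpha> \<beta> \<le> 216 * 216"
proof -
  have "Gamma N \<alpha> \<beta> \<le> card \<alpha> * card \<beta>"
    using assms by (intro Gamma_le_card_mult) (auto simp: orbits_def finite_orbit)
  also have "\<dots> \<le> 216 * 216"
    using assms by (intro mult_le_mono) (auto simp: orbits_def card_orbit_le)
  finally show ?thesis .
qed

lemma Lambda_subset_cube:
  "Lambda N \<subseteq> {-int N..int N} \<times> {-int N..int N} \<times> {-int N..int N}"
  by (auto simp: Lambda_def supnorm_def)

lemma finite_Lambda: "finite (Lambda N)"
  using Lambda_subset_cube by (rule finite_subset) simp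

lemma card_Lambda_le: "card (Lambda N) \<le> (2 * N + 1) ^ 3"
proof -
  have "card (Lambda N) \<le> card ({-int N..int N} \<times> {-int N..int N} \<times> {-int N..int N})"
    by (rule card_mono[OF _ Lambda_subset_cube]) simp
  also have "\<dots> = (2 * N + 1) ^ 3"
    by (simp add: card_cartesian_product power3_eq_cube) (simp add: nat_mult_distrib nat_add_distrib)
  finally show ?thesis .
qed

lemma finite_orbits: "finite (orbits N)"
  unfolding orbits_def using finite_Lambda by simp

lemma card_orbits_le: "card (orbits N) \<le> (2 * N + 1) ^ 3"
  unfolding orbits_def using card_image_le[OF finite_Lambda] card_Lambda_le le_trans by blast

lemma orbits_nonempty:
  assumes "N \<ge> 1"
  shows "orbits N \<noteq> {}"
proof -
  have "(1, 0, 0) \<in> Lambda N"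
    using assms by (simp add: Lambda_def supnorm_def)
  then show ?thesis
    unfolding orbits_def by blast
qed

lemma sum_sqrt_Gamma_le:
  assumes "\<alpha> \<in> orbits N"
  shows "(\<Sum>\<beta>\<in>orbits N. sqrt (real (Gamma N \<alpha> \<beta>))) \<le> 216 * real ((2 * N + 1) ^ 3)"
proof -
  have "sqrt (real (Gamma N \<alpha> \<beta>)) \<le> 216" if "\<beta> \<in> orbits N" for \<beta>
  proof -
    have "real (Gamma N \<alpha> \<beta>) \<le> 216\<^sup>2"
      using Gamma_orbits_le[OF assms that] by (simp add: power2_eq_square flip: of_nat_le_iff)
    then have "sqrt (real (Gamma N \<alpha> \<beta>)) \<le> sqrt (216\<^sup>2)"
      by (rule real_sqrt_le_mono)
    then show ?thesis
      by simp
  qed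
  then have "(\<Sum>\<beta>\<in>orbits N. sqrt (real (Gamma N \<alpha> \<beta>))) \<le> (\<Sum>\<beta>\<in>orbits N. 216)"
    by (rule sum_mono)
  also have "\<dots> = 216 * real (card (orbits N))"
    by simp
  also have "\<dots> \<le> 216 * real ((2 * N + 1) ^ 3)"
    by (intro mult_left_mono of_nat_mono card_orbits_le) simp
  finally show ?thesis .
qed

lemma cube_le_powr:
  assumes "N \<ge> 1" "\<epsilon> \<ge> 0"
  shows "real ((2 * N + 1) ^ 3) \<le> 27 * real N powr (4 + \<epsilon>)"
proof -
  have "(2 * N + 1) ^ 3 \<le> (3 * N) ^ 3"
    using assms by (intro power_mono) auto
  then have "real ((2 * N + 1) ^ 3) \<le> real (27 * N ^ 3)"
    by (subst of_nat_le_iff) (simp add: power_mult_distrib)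
  also have "\<dots> = 27 * real N ^ 3"
    by simp
  also have "\<dots> \<le> 27 * real N ^ 4"
    using assms by (intro mult_left_mono power_increasing) auto
  also have "real N ^ 4 = real N powr 4"
    using assms by (simp add: powr_realpow)
  also have "\<dots> \<le> real N powr (4 + \<epsilon>)"
    using assms by (intro powr_mono) auto
  finally show ?thesis by simp
qed

theorem proposition4p8:
  shows "\<forall>\<epsilon>::real. \<epsilon> > 0 \<longrightarrow> (\<exists>C::real. C > 0 \<and> (\<forall>N::nat. N \<ge> 1 \<longrightarrow>
           Max ((\<lambda>\<alpha>. \<Sum>\<beta>\<in>orbits N. sqrt (real (Gamma N \<alpha> \<beta>))) ` orbits N)
             \<le> C * real N powr (4 + \<epsilon>)))"
proof (intro allI impI exI[of _ "216 * 27"] conjI)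
  fix \<epsilon> :: real and N :: nat
  assume "\<epsilon> > 0" "N \<ge> 1"
  have "(\<Sum>\<beta>\<in>orbits N. sqrt (real (Gamma N \<alpha> \<beta>))) \<le> 216 * 27 * real N powr (4 + \<epsilon>)"
    if "\<alpha> \<in> orbits N" for \<alpha>
    using sum_sqrt_Gamma_le[OF that] cube_le_powr[OF \<open>N \<ge> 1\<close>, of \<epsilon>] \<open>\<epsilon> > 0\<close> by linarith
  then show "Max ((\<lambda>\<alpha>. \<Sum>\<beta>\<in>orbits N. sqrt (real (Gamma N \<alpha> \<beta>))) ` orbits N)
               \<le> 216 * 27 * real N powr (4 + \<epsilon>)"
    using finite_orbits orbits_nonempty[OF \<open>N \<ge> 1\<close>] by simp
qed simp

end
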